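(* Let $C\ge 8$ and let $p=p(n)$ satisfy $0<p\le 2/n$ and $n^2p=\omega(1)$. Let $H$ be an $n$-vertex connected graph with maximum degree $\Delta\le n^2p/(4800C)$. Let $G=G(n,p)$ on $V(H)$ and $R=H\cup G$. Then whp $R$ contains vertex-disjoint connected subgraphs $R_1,\dots,R_m$ such that (1) $96C\Delta(np)^{-1}\le |V(R_i)|\le 192C\Delta(np)^{-1}$ for each $i\in[m]$, and (2) $m\ge n^2p/(9600C\Delta)$.
   Context: $G(n,p)$ is the binomial random graph on $n$ vertices (each pair independently an edge with probability $p$). Asymptotics are as $n\to\infty$; whp means with probability $1-o(1)$. *)

theory Defs
  imports "HOL-Probability.Probability"
begin

definition pairs_on :: "nat set \<Rightarrow> nat set set" where
  "pairs_on V = {e. \<exists>i j. i \<in> V \<and> j \<in> V \<and> i \<noteq> j \<and> e = {i, j}}"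

definition graph_on :: "nat set \<Rightarrow> nat set set \<Rightarrow> bool" where
  "graph_on V E \<longleftrightarrow> E \<subseteq> pairs_on V"

definition connected_graph :: "nat set \<Rightarrow> nat set set \<Rightarrow> bool" where
  "connected_graph V E \<longleftrightarrow> V \<noteq> {} \<and>
     (\<forall>u\<in>V. \<forall>v\<in>V. (\<lambda>x y. {x, y} \<in> E)\<^sup>*\<^sup>* u v)"

definition degree :: "nat set set \<Rightarrow> nat \<Rightarrow> nat" where
  "degree E v = card {u. {u, v} \<in> E}"

definition max_degree :: "nat \<Rightarrow> nat set set \<Rightarrow> nat" where
  "max_degree n E = Max ((\<lambda>v. degree E v) ` {..<n})"

definition Gnp :: "nat \<Rightarrow> real \<Rightarrow> (nat set \<Rightarrow> bool) pmf" where
  "Gnp n p = Pi_pmf (pairs_on {..<n}) False (\<lambda>_. bernoulli_pmf p)"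

definition edges_of :: "nat \<Rightarrow> (nat set \<Rightarrow> bool) \<Rightarrow> nat set set" where
  "edges_of n f = {e \<in> pairs_on {..<n}. f e}"

definition good_family :: "nat \<Rightarrow> real \<Rightarrow> real \<Rightarrow> real \<Rightarrow> nat set set \<Rightarrow> bool" where
  "good_family n C p \<Delta> R \<longleftrightarrow>
     (\<exists>Rs :: (nat set \<times> nat set set) list.
        (\<forall>i < length Rs.
           fst (Rs ! i) \<subseteq> {..<n} \<and> graph_on (fst (Rs ! i)) (snd (Rs ! i)) \<and>
           snd (Rs ! i) \<subseteq> R \<and> connected_graph (fst (Rs ! i)) (snd (Rs ! i)) \<and>
           96 * C * \<Delta> / (real n * p) \<le> real (card (fst (Rs ! i))) \<and>
           real (card (fst (Rs ! i))) \<le> 192 * C * \<Delta> / (real n * p)) \<and>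
        (\<forall>i < length Rs. \<forall>j < length Rs. i \<noteq> j \<longrightarrow> fst (Rs ! i) \<inter> fst (Rs ! j) = {}) \<and>
        real (length Rs) \<ge> (real n)^2 * p / (9600 * C * \<Delta>))"

end

theory Submission
  imports Defs
begin

text \<open>
  Cut the connected graph \<open>H\<close> into vertex-disjoint connected pieces of between
  \<open>k \<approx> 96C/(np)\<close> and \<open>\<Delta>k\<close> vertices, leaving fewer than \<open>k\<close> vertices uncovered:
  a minimal connected vertex set of size at least \<open>k\<close> with connected complement has at most
  \<open>1 + \<Delta>(k - 1)\<close> vertices.
  There are at most \<open>n\<^sup>2p/384\<close> pieces, so a union bound over the at most \<open>4\<^sup>N\<close> pairs of
  disjoint subfamilies shows that whp \<open>G(n,p)\<close> has an edge between any two disjoint unions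
  of pieces covering \<open>n/10\<close> vertices each.
  On this event, as long as the remaining pieces cover \<open>3n/10\<close> vertices, some component of
  the graph on the pieces (adjacent when joined by an edge of \<open>G\<close>) covers \<open>L = 96C\<Delta>/(np)\<close>
  vertices, and growing a connected set of pieces inside it yields a cluster of \<open>L\<close> to \<open>2L\<close>
  vertices. Repeating gives at least \<open>n/(100L)\<close> disjoint connected clusters.
\<close>

section \<open>Reachability inside a vertex set\<close>

definition reach_within :: "('a \<Rightarrow> 'a \<Rightarrow> bool) \<Rightarrow> 'a set \<Rightarrow> 'a \<Rightarrow> 'a \<Rightarrow> bool" where
  "reach_within r S = (\<lambda>x y. r x y \<and> x \<in> S \<and> y \<in> S)\<^sup>*\<^sup>*"

definition connected_within :: "('a \<Rightarrow> 'a \<Rightarrow> bool) \<Rightarrow> 'a set \<Rightarrow> bool" where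
  "connected_within r S \<longleftrightarrow> (\<forall>u\<in>S. \<forall>v\<in>S. reach_within r S u v)"

definition component_within :: "('a \<Rightarrow> 'a \<Rightarrow> bool) \<Rightarrow> 'a set \<Rightarrow> 'a \<Rightarrow> 'a set" where
  "component_within r S x = {y. reach_within r S x y}"

lemma reach_within_refl [simp]: "reach_within r S u u"
  by (simp add: reach_within_def)

lemma reach_within_edge: "r u v \<Longrightarrow> u \<in> S \<Longrightarrow> v \<in> S \<Longrightarrow> reach_within r S u v"
  by (auto simp: reach_within_def)

lemma reach_within_trans:
  "reach_within r S u v \<Longrightarrow> reach_within r S v w \<Longrightarrow> reach_within r S u w"
  unfolding reach_within_def by (rule rtranclp_trans)

lemma reach_within_mono:
  assumes "reach_within r S u v" "S \<subseteq> T" "\<And>x y. r x y \<Longrightarrow> r' x y"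
  shows "reach_within r' T u v"
  using assms(1) unfolding reach_within_def
  by (rule rtranclp_mono[THEN predicate2D, rotated]) (use assms(2,3) in auto)

lemma reach_within_sym:
  assumes "symp r" "reach_within r S u v"
  shows "reach_within r S v u"
proof -
  have "symp (\<lambda>x y. r x y \<and> x \<in> S \<and> y \<in> S)"
    using assms(1) by (auto simp: symp_def)
  then have "symp (reach_within r S)"
    unfolding reach_within_def by (rule symp_rtranclp)
  then show ?thesis
    using assms(2) by (rule sympD)
qed

lemma reach_within_imp_mem: "reach_within r S u v \<Longrightarrow> u \<noteq> v \<Longrightarrow> u \<in> S \<and> v \<in> S"
  unfolding reach_within_def by (induction rule: rtranclp_induct) auto

lemma reach_within_crossing:
  assumes "reach_within r V a b" "a \<in> S" "b \<notin> S"
  shows "\<exists>x z. x \<in> S \<and> z \<notin> S \<and> x \<in> V \<and> z \<in> V \<and> r x z"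
  using assms unfolding reach_within_def by (induction rule: rtranclp_induct) auto

lemma connected_within_from_root:
  assumes "symp r" "\<forall>w\<in>S. reach_within r S x w"
  shows "connected_within r S"
  unfolding connected_within_def
  using reach_within_trans reach_within_sym[OF assms(1)] assms(2) by metis

lemma component_within_subset: "x \<in> S \<Longrightarrow> component_within r S x \<subseteq> S"
  by (auto simp: component_within_def dest: reach_within_imp_mem)

lemma reach_within_component:
  assumes "reach_within r S u v" "reach_within r S y u"
  shows "reach_within r (component_within r S y) u v"
  using assms(1)[unfolded reach_within_def]
proof (induction rule: rtranclp_induct)
  case base
  then show ?case by simp
next
  case (step b c)
  have "reach_within r S u b"
    using step(1) by (simp add: reach_within_def)
  then have yb: "reach_within r S y b"
    by (rule reach_within_trans[OF assms(2)])
  have "reach_within r S b c"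
    using step(2) by (auto intro: reach_within_edge)
  then have "reach_within r S y c"
    by (rule reach_within_trans[OF yb])
  then have "b \<in> component_within r S y" "c \<in> component_within r S y"
    using yb by (auto simp: component_within_def)
  then show ?case
    using reach_within_trans[OF step.IH reach_within_edge] step(2) by simp
qed

lemma connected_within_component:
  assumes "symp r"
  shows "connected_within r (component_within r S y)"
  unfolding connected_within_def
proof (intro ballI)
  fix u v assume "u \<in> component_within r S y" "v \<in> component_within r S y"
  then have yu: "reach_within r S y u" and yv: "reach_within r S y v"
    by (auto simp: component_within_def)
  have "reach_within r S u v"
    by (rule reach_within_trans[OF reach_within_sym[OF assms yu] yv])
  then show "reach_within r (component_within r S y) u v"
    using yu by (rule reach_within_component)
qed

lemma reach_within_outside_component:
  assumes "reach_within r S a b" "b \<notin> component_within r S y"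
  shows "reach_within r (S - component_within r S y) a b"
  using assms(1)[unfolded reach_within_def] assms(2)
proof (induction rule: rtranclp_induct)
  case base
  then show ?case by simp
next
  case (step b c)
  have "b \<notin> component_within r S y"
  proof
    assume "b \<in> component_within r S y"
    then have "reach_within r S y c"
      using step(2) reach_within_trans[OF _ reach_within_edge]
      by (auto simp: component_within_def)
    then show False
      using step(4) by (simp add: component_within_def)
  qed
  then have "reach_within r (S - component_within r S y) b c"
    using step(2,4) by (auto intro: reach_within_edge)
  then show ?case
    by (rule reach_within_trans[OF step.IH[OF \<open>b \<notin> component_within r S y\<close>]])
qed

lemma connected_within_insert:
  assumes "symp r" "connected_within r T" "x \<in> T" "r x y"
  shows "connected_within r (insert y T)"
proof (rule connected_within_from_root[OF assms(1), of _ x], intro ballI)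
  fix w assume "w \<in> insert y T"
  then consider "w \<in> T" | "w = y"
    by blast
  then show "reach_within r (insert y T) x w"
  proof cases
    case 1
    then have "reach_within r T x w"
      using assms(2,3) by (simp add: connected_within_def)
    then show ?thesis
      by (rule reach_within_mono) auto
  next
    case 2
    then show ?thesis
      using assms(3,4) by (intro reach_within_edge) auto
  qed
qed

section \<open>Splitting a connected graph into pieces\<close>

lemma connected_within_remove_vertex:
  assumes "connected_within r S" "x \<in> S" "w \<in> S - {x}"
  shows "\<exists>y \<in> S - {x}. r x y \<and> w \<in> component_within r (S - {x}) y"
proof -
  have "reach_within r S x w"
    using assms unfolding connected_within_def by blast
  then have "w = x \<or> (\<exists>y \<in> S - {x}. r x y \<and> reach_within r (S - {x}) y w)"
    unfolding reach_within_def[of r S]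
  proof (induction rule: rtranclp_induct)
    case base
    then show ?case by simp
  next
    case (step w' w)
    consider "w = x" | "w' = x" "w \<noteq> x" | "w' \<noteq> x" "w \<noteq> x" by blast
    then show ?case
    proof cases
      case 1
      then show ?thesis by simp
    next
      case 2
      then show ?thesis using step(2) by auto
    next
      case 3
      then obtain y where y: "y \<in> S - {x}" "r x y" "reach_within r (S - {x}) y w'"
        using step(3) by blast
      have "reach_within r (S - {x}) w' w"
        using step(2) 3 by (auto intro: reach_within_edge)
      then show ?thesis
        using y reach_within_trans[OF y(3)] by blast
    qed
  qed
  then show ?thesis
    using assms(3) by (auto simp: component_within_def)
qed

lemma connected_within_diff_component:
  assumes "symp r" "S \<subseteq> V" "connected_within r S" "connected_within r (V - S)"
    and "x \<in> S" "y \<in> S - {x}" and link: "V - S \<noteq> {} \<Longrightarrow> \<exists>z \<in> V - S. r x z"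
  shows "connected_within r (V - component_within r (S - {x}) y)"
proof -
  define K where "K = component_within r (S - {x}) y"
  have KS: "K \<subseteq> S - {x}"
    unfolding K_def using assms(6) by (rule component_within_subset)
  have xV: "x \<in> V - K"
    using assms(2,5) KS by auto
  have "reach_within r (V - K) x w" if w: "w \<in> V - K" for w
  proof -
    consider "w = x" | "w \<in> V - S" | "w \<in> S - {x} - K"
      using w KS by auto
    then show ?thesis
    proof cases
      case 1
      then show ?thesis by simp
    next
      case 2
      then obtain z where z: "z \<in> V - S" "r x z"
        using link by blast
      have "reach_within r (V - K) x z"
        using z xV KS by (intro reach_within_edge) auto
      moreover have "reach_within r (V - S) z w"
        using assms(4) z 2 unfolding connected_within_def by blast
      then have "reach_within r (V - K) z w"
        by (rule reach_within_mono) (use KS in auto)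
      ultimately show ?thesis
        by (rule reach_within_trans)
    next
      case 3
      then obtain y' where y': "y' \<in> S - {x}" "r x y'" "w \<in> component_within r (S - {x}) y'"
        using connected_within_remove_vertex[OF assms(3,5)] by blast
      have "reach_within r (S - {x}) y' w"
        using y'(3) by (simp add: component_within_def)
      then have "reach_within r (S - {x} - K) y' w"
        using 3 unfolding K_def by (intro reach_within_outside_component) auto
      then have y'w: "reach_within r (V - K) y' w"
        by (rule reach_within_mono) (use assms(2) in auto)
      have "y' \<in> V - K"
        using reach_within_imp_mem[OF \<open>reach_within r (S - {x} - K) y' w\<close>] 3 assms(2)
        by (cases "y' = w") auto
      then have "reach_within r (V - K) x y'"
        using xV y'(2) by (intro reach_within_edge)
      then show ?thesis
        using y'w by (rule reach_within_trans)
    qed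
  qed
  then show ?thesis
    unfolding K_def[symmetric] by (intro connected_within_from_root[OF assms(1), of _ x]) auto
qed

lemma connected_within_exit_vertex:
  assumes "connected_within r V" "S \<subseteq> V" "S \<noteq> {}"
  shows "\<exists>x\<in>S. V - S \<noteq> {} \<longrightarrow> (\<exists>z \<in> V - S. r x z)"
proof (cases "V - S = {}")
  case True
  then show ?thesis
    using assms(3) by blast
next
  case False
  then obtain a b where ab: "a \<in> S" "b \<in> V - S"
    using assms(3) by blast
  then have "reach_within r V a b"
    using assms(1,2) unfolding connected_within_def by blast
  then show ?thesis
    using reach_within_crossing[of r V a b S] ab by blast
qed

lemma connected_within_large_component_after_removal:
  assumes "connected_within r S" "finite S" "x \<in> S"
    and "finite {u. r x u}" "card {u. r x u} \<le> D" "1 + D * (k - 1) < card S"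
  shows "\<exists>y \<in> S - {x}. r x y \<and> k \<le> card (component_within r (S - {x}) y)"
proof (rule ccontr)
  define Nb where "Nb = {y \<in> S - {x}. r x y}"
  define K where "K y = component_within r (S - {x}) y" for y
  assume "\<not> ?thesis"
  then have small: "card (K y) \<le> k - 1" if "y \<in> Nb" for y
    using that by (force simp: K_def Nb_def)
  have "Nb \<subseteq> {u. r x u}"
    by (auto simp: Nb_def)
  then have finNb: "finite Nb" and "card Nb \<le> D"
    using assms(4,5) card_mono[of "{u. r x u}" Nb] finite_subset by auto
  have "S - {x} \<subseteq> (\<Union>y\<in>Nb. K y)"
    using connected_within_remove_vertex[OF assms(1,3)] by (auto simp: K_def Nb_def)
  moreover have "K y \<subseteq> S - {x}" if "y \<in> Nb" for y
    using that component_within_subset[of y "S - {x}" r] by (auto simp: K_def Nb_def)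
  then have "finite (\<Union>y\<in>Nb. K y)"
    using finNb assms(2) by (meson finite_Diff finite_UN_I finite_subset)
  ultimately have "card (S - {x}) \<le> card (\<Union>y\<in>Nb. K y)"
    by (rule card_mono[rotated])
  also have "\<dots> \<le> (\<Sum>y\<in>Nb. card (K y))"
    by (rule card_UN_le[OF finNb])
  also have "\<dots> \<le> card Nb * (k - 1)"
    using sum_bounded_above[of Nb "\<lambda>y. card (K y)" "k - 1"] small by fastforce
  also have "\<dots> \<le> D * (k - 1)"
    using \<open>card Nb \<le> D\<close> by simp
  finally show False
    using assms(2,3,6) by (simp add: card_Diff_singleton)
qed

lemma connected_within_split_off:
  assumes "symp r" "finite V" "connected_within r V" "1 \<le> k" "k \<le> card V"
    and deg: "\<And>v. finite {u. r v u} \<and> card {u. r v u} \<le> D"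
  shows "\<exists>S \<subseteq> V. connected_within r S \<and> connected_within r (V - S) \<and>
    k \<le> card S \<and> card S \<le> 1 + D * (k - 1)"
proof -
  define valid where "valid S \<longleftrightarrow> S \<subseteq> V \<and> connected_within r S \<and>
    connected_within r (V - S) \<and> k \<le> card S" for S
  have "valid V"
    using assms(3,5) by (simp add: valid_def connected_within_def)
  then obtain S where S: "valid S" and min: "\<And>S'. valid S' \<Longrightarrow> card S \<le> card S'"
    using ex_has_least_nat[of valid V card] by blast
  have SV: "S \<subseteq> V" and cS: "connected_within r S" and cVS: "connected_within r (V - S)"
    and kS: "k \<le> card S"
    using S by (auto simp: valid_def)
  have finS: "finite S"
    using SV assms(2) finite_subset by blast
  have "S \<noteq> {}"
    using kS assms(4) by auto
  then obtain x where xS: "x \<in> S" and leaves: "V - S \<noteq> {} \<Longrightarrow> \<exists>z \<in> V - S. r x z"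
    using connected_within_exit_vertex[OF assms(3) SV] by blast
  \<comment> \<open>Otherwise a large component of \<open>S - {x}\<close> would be a smaller valid choice.\<close>
  have "card S \<le> 1 + D * (k - 1)"
  proof (rule ccontr)
    assume "\<not> ?thesis"
    then obtain y where y: "y \<in> S - {x}" "k \<le> card (component_within r (S - {x}) y)"
      using connected_within_large_component_after_removal[OF cS finS xS] deg[of x] by force
    define K where "K = component_within r (S - {x}) y"
    have KS: "K \<subseteq> S - {x}"
      unfolding K_def using y(1) by (rule component_within_subset)
    have "connected_within r K"
      unfolding K_def by (rule connected_within_component[OF assms(1)])
    moreover have "connected_within r (V - K)"
      unfolding K_def using connected_within_diff_component[OF assms(1) SV cS cVS xS y(1) leaves] .
    ultimately have "valid K"
      using KS SV y(2) by (auto simp: valid_def K_def)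
    moreover have "card K < card S"
      using KS xS finS by (intro psubset_card_mono) auto
    ultimately show False
      using min by (meson not_le)
  qed
  then show ?thesis
    using SV cS cVS kS by blast
qed

lemma connected_within_pieces:
  assumes "symp r" "finite V" "connected_within r V" "1 \<le> k"
    and deg: "\<And>v. finite {u. r v u} \<and> card {u. r v u} \<le> D"
  shows "\<exists>P. finite P \<and> disjoint P \<and> card V < card (\<Union>P) + k \<and>
    (\<forall>X\<in>P. X \<subseteq> V \<and> connected_within r X \<and> k \<le> card X \<and> card X \<le> 1 + D * (k - 1))"
  using assms(2,3)
proof (induction "card V" arbitrary: V rule: less_induct)
  case less
  show ?case
  proof (cases "card V < k")
    case True
    then show ?thesis by (intro exI[of _ "{}"]) auto
  next
    case False
    then obtain S where S: "S \<subseteq> V" "connected_within r S" "connected_within r (V - S)"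
      "k \<le> card S" "card S \<le> 1 + D * (k - 1)"
      using connected_within_split_off[OF assms(1) less(2,3) assms(4) _ deg] by fastforce
    have finS: "finite S"
      using S(1) less(2) finite_subset by blast
    have "S \<noteq> {}"
      using S(4) assms(4) by auto
    then have "card (V - S) < card V"
      using S(1) less(2) by (intro psubset_card_mono) auto
    then obtain P where P: "finite P" "disjoint P" "card (V - S) < card (\<Union>P) + k"
      "\<forall>X\<in>P. X \<subseteq> V - S \<and> connected_within r X \<and> k \<le> card X \<and> card X \<le> 1 + D * (k - 1)"
      using less(1)[of "V - S"] less(2) S(3) by auto
    have disj: "S \<inter> \<Union>P = {}"
      using P(4) by blast
    have "finite (\<Union>P)"
      using P(4) less(2) by (meson Sup_least finite_Diff finite_subset)
    then have "card (\<Union>(insert S P)) = card S + card (\<Union>P)"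
      using card_Un_disjoint[OF finS _ disj] by simp
    moreover have "card (V - S) = card V - card S" "card S \<le> card V"
      using card_Diff_subset[OF finS S(1)] card_mono[OF less(2) S(1)] by auto
    moreover have "disjoint (insert S P)"
      using P(2,4) by (auto simp: pairwise_insert disjnt_def)
    ultimately show ?thesis
      using P S by (intro exI[of _ "insert S P"]) auto
  qed
qed

section \<open>Gluing pieces into clusters\<close>

abbreviation adjacent :: "'a set set \<Rightarrow> 'a \<Rightarrow> 'a \<Rightarrow> bool" where
  "adjacent E \<equiv> \<lambda>x y. {x, y} \<in> E"

lemma symp_adjacent: "symp (adjacent E)"
  by (simp add: symp_def insert_commute)

definition edge_between :: "'a set set \<Rightarrow> 'a set \<Rightarrow> 'a set \<Rightarrow> bool" where
  "edge_between F X Y \<longleftrightarrow> (\<exists>a\<in>X. \<exists>b\<in>Y. {a, b} \<in> F)"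

lemma symp_edge_between: "symp (edge_between F)"
  unfolding symp_def edge_between_def by (metis insert_commute)

lemma connected_within_Union:
  assumes "\<forall>X\<in>T. connected_within (adjacent H) X" "connected_within (edge_between F) T"
  shows "connected_within (adjacent (H \<union> F)) (\<Union>T)"
proof -
  have inside: "reach_within (adjacent (H \<union> F)) (\<Union>T) u v" if "Z \<in> T" "u \<in> Z" "v \<in> Z" for Z u v
  proof -
    have "reach_within (adjacent H) Z u v"
      using assms(1) that by (auto simp: connected_within_def)
    then show ?thesis
      by (rule reach_within_mono) (use that in auto)
  qed
  have "\<forall>b\<in>Y. reach_within (adjacent (H \<union> F)) (\<Union>T) a b"
    if "reach_within (edge_between F) T X Y" "X \<in> T" "a \<in> X" for X Y a
    using that(1)[unfolded reach_within_def]
  proof (induction rule: rtranclp_induct)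
    case base
    then show ?case
      using inside that(2,3) by blast
  next
    case (step Y' Y)
    from step.hyps(2) obtain c d where cd: "c \<in> Y'" "d \<in> Y" "{c, d} \<in> F"
      unfolding edge_between_def by blast
    show ?case
    proof
      fix b assume "b \<in> Y"
      have "reach_within (adjacent (H \<union> F)) (\<Union>T) c d"
        using cd step.hyps(2) by (intro reach_within_edge) auto
      then have "reach_within (adjacent (H \<union> F)) (\<Union>T) a d"
        using step.IH cd(1) reach_within_trans[of _ _ a c d] by blast
      moreover have "reach_within (adjacent (H \<union> F)) (\<Union>T) d b"
        using inside step.hyps(2) cd(2) \<open>b \<in> Y\<close> by blast
      ultimately show "reach_within (adjacent (H \<union> F)) (\<Union>T) a b"
        by (rule reach_within_trans)
    qed
  qed
  then show ?thesis
    using assms(2) unfolding connected_within_def by blast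
qed

definition links_large_unions :: "'a set set \<Rightarrow> 'a set set \<Rightarrow> real \<Rightarrow> bool" where
  "links_large_unions F Q s \<longleftrightarrow> (\<forall>A B. A \<subseteq> Q \<longrightarrow> B \<subseteq> Q \<longrightarrow> A \<inter> B = {} \<longrightarrow>
     s \<le> card (\<Union>A) \<longrightarrow> s \<le> card (\<Union>B) \<longrightarrow> edge_between F (\<Union>A) (\<Union>B))"

lemma links_large_unions_subset:
  "links_large_unions F P s \<Longrightarrow> Q \<subseteq> P \<Longrightarrow> links_large_unions F Q s"
  unfolding links_large_unions_def by (meson subset_trans)

lemma grow_cluster:
  fixes L :: real
  assumes "finite K" "connected_within (edge_between F) K" "\<forall>X\<in>K. card X \<le> L" "L \<le> card (\<Union>K)"
  shows "T0 \<subseteq> K \<Longrightarrow> T0 \<noteq> {} \<Longrightarrow> connected_within (edge_between F) T0 \<Longrightarrow>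
    card (\<Union>T0) \<le> 2 * L \<Longrightarrow>
    \<exists>T\<subseteq>K. T \<noteq> {} \<and> connected_within (edge_between F) T \<and> L \<le> card (\<Union>T) \<and> card (\<Union>T) \<le> 2 * L"
proof (induction "card (K - T0)" arbitrary: T0 rule: less_induct)
  case less
  show ?case
  proof (cases "L \<le> card (\<Union>T0)")
    case True
    then show ?thesis using less.prems by blast
  next
    case False
    then have "T0 \<noteq> K"
      using assms(4) by auto
    then obtain X0 Y0 where "X0 \<in> T0" "Y0 \<in> K - T0"
      using less.prems(1,2) by blast
    then have "reach_within (edge_between F) K X0 Y0"
      using assms(2) less.prems(1) unfolding connected_within_def by blast
    then obtain X Y where XY: "X \<in> T0" "Y \<in> K - T0" "edge_between F X Y"
      using reach_within_crossing[of _ K X0 Y0 T0] \<open>X0 \<in> T0\<close> \<open>Y0 \<in> K - T0\<close> by blast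
    have "card (\<Union>(insert Y T0)) \<le> card Y + card (\<Union>T0)"
      by (simp add: card_Un_le)
    moreover have "card Y \<le> L"
      using assms(3) XY(2) by blast
    ultimately have "card (\<Union>(insert Y T0)) \<le> 2 * L"
      using False by linarith
    moreover have "card (K - insert Y T0) < card (K - T0)"
      using XY(2) assms(1) by (intro psubset_card_mono) auto
    moreover have "connected_within (edge_between F) (insert Y T0)"
      using connected_within_insert[OF symp_edge_between less.prems(3) XY(1,3)] .
    ultimately show ?thesis
      using less.hyps[of "insert Y T0"] less.prems(1) XY(2) by blast
  qed
qed

lemma Union_disjoint_subfamilies:
  assumes "disjoint Q" "A \<subseteq> Q" "B \<subseteq> Q" "A \<inter> B = {}"
  shows "\<Union>A \<inter> \<Union>B = {}"
proof (rule equals0I)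
  fix x assume "x \<in> \<Union>A \<inter> \<Union>B"
  then obtain X Y where "X \<in> A" "Y \<in> B" "x \<in> X" "x \<in> Y"
    by blast
  moreover have "X \<noteq> Y"
    using assms(4) calculation(1,2) by blast
  ultimately show False
    using disjointD[OF assms(1)] assms(2,3) by blast
qed

lemma component_closed_Diff_component:
  assumes "symp r" "\<forall>Z\<in>A. component_within r S Z \<subseteq> A"
  shows "\<forall>Z\<in>A - component_within r S X.
    component_within r S Z \<subseteq> A - component_within r S X"
proof (intro ballI subsetI)
  fix Z Y assume Z: "Z \<in> A - component_within r S X" and Y: "Y \<in> component_within r S Z"
  have "Y \<notin> component_within r S X"
  proof
    assume "Y \<in> component_within r S X"
    then have "reach_within r S X Y"
      by (simp add: component_within_def)
    moreover have "reach_within r S Y Z"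
      using Y reach_within_sym[OF assms(1)] by (simp add: component_within_def)
    ultimately have "reach_within r S X Z"
      by (rule reach_within_trans)
    then show False
      using Z by (simp add: component_within_def)
  qed
  then show "Y \<in> A - component_within r S X"
    using assms(2) Z Y by blast
qed

lemma exists_component_closed_subfamily:
  fixes L s :: real and r :: "'a set \<Rightarrow> 'a set \<Rightarrow> bool" and Q :: "'a set set"
  defines "C \<equiv> component_within r Q"
  assumes "symp r" "finite Q" "0 < s" "L \<le> s" "s \<le> card (\<Union>Q)"
    and small: "\<forall>X\<in>Q. card (\<Union>(C X)) < L"
  shows "\<exists>A\<subseteq>Q. (\<forall>X\<in>A. C X \<subseteq> A) \<and> s \<le> card (\<Union>A) \<and> card (\<Union>A) < 2 * s"
proof -
  \<comment> \<open>Removing one component from a minimal closed family drops it below \<open>s\<close>.\<close>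
  define closed where "closed A \<longleftrightarrow> A \<subseteq> Q \<and> (\<forall>X\<in>A. C X \<subseteq> A) \<and> s \<le> card (\<Union>A)" for A
  have "closed Q"
    using assms(6) component_within_subset[of _ Q r] by (auto simp: closed_def C_def)
  then obtain A where A: "closed A" and min: "\<And>A'. closed A' \<Longrightarrow> card A \<le> card A'"
    using ex_has_least_nat[of closed Q card] by blast
  have AQ: "A \<subseteq> Q" and A_closed: "\<forall>X\<in>A. C X \<subseteq> A" and sA: "s \<le> card (\<Union>A)"
    using A by (auto simp: closed_def)
  have "A \<noteq> {}"
    using sA assms(4) by auto
  then obtain X where XA: "X \<in> A"
    by blast
  have "\<forall>Z\<in>A - C X. C Z \<subseteq> A - C X"
    unfolding C_def using component_closed_Diff_component[OF assms(2)] A_closed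
    by (simp add: C_def)
  moreover have "card (A - C X) < card A"
  proof (rule psubset_card_mono)
    show "finite A"
      using AQ assms(3) finite_subset by blast
    have "X \<in> C X"
      by (simp add: C_def component_within_def)
    then show "A - C X \<subset> A"
      using XA by blast
  qed
  ultimately have "\<not> closed (A - C X)"
    using min by (meson not_le)
  then have "card (\<Union>(A - C X)) < s"
    using AQ \<open>\<forall>Z\<in>A - C X. C Z \<subseteq> A - C X\<close> unfolding closed_def by auto
  moreover have "\<Union>A = \<Union>(A - C X) \<union> \<Union>(C X)"
    using A_closed XA by blast
  then have "card (\<Union>A) \<le> card (\<Union>(A - C X)) + card (\<Union>(C X))"
    by (simp add: card_Un_le)
  moreover have "card (\<Union>(C X)) < L"
    using small XA AQ by blast
  ultimately have "card (\<Union>A) < 2 * s"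
    using assms(5) by linarith
  then show ?thesis
    using AQ A_closed sA by blast
qed

lemma links_large_unions_large_component:
  fixes L s :: real
  assumes "finite Q" "0 < L" "L \<le> s" "links_large_unions F Q s" "3 * s \<le> card (\<Union>Q)"
  shows "\<exists>X\<in>Q. L \<le> card (\<Union>(component_within (edge_between F) Q X))"
proof (rule ccontr)
  let ?C = "component_within (edge_between F) Q"
  assume "\<not> ?thesis"
  then have small: "\<forall>X\<in>Q. card (\<Union>(?C X)) < L"
    by (simp add: not_le)
  have "0 < s" "s \<le> card (\<Union>Q)"
    using assms(2,3,5) by linarith+
  then obtain A where A: "A \<subseteq> Q" "\<forall>X\<in>A. ?C X \<subseteq> A" "s \<le> card (\<Union>A)" "card (\<Union>A) < 2 * s"
    using exists_component_closed_subfamily[OF symp_edge_between assms(1) _ assms(3) _ small]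
    by blast
  have "\<Union>Q = \<Union>A \<union> \<Union>(Q - A)"
    using A(1) by blast
  then have "card (\<Union>Q) \<le> card (\<Union>A) + card (\<Union>(Q - A))"
    by (simp add: card_Un_le)
  then have "s \<le> card (\<Union>(Q - A))"
    using A(4) assms(5) by linarith
  then have "edge_between F (\<Union>A) (\<Union>(Q - A))"
    using assms(4) A(1,3) unfolding links_large_unions_def by (simp add: Diff_disjoint)
  then obtain X Y where XY: "X \<in> A" "Y \<in> Q - A" "edge_between F X Y"
    unfolding edge_between_def by blast
  then have "Y \<in> ?C X"
    using A(1) by (auto simp: component_within_def intro: reach_within_edge)
  then show False
    using A(2) XY by blast
qed

lemma cluster_exists:
  fixes L s :: real
  assumes "finite Q" "\<forall>X\<in>Q. card X \<le> L" "0 < L" "L \<le> s" "links_large_unions F Q s"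
    "3 * s \<le> card (\<Union>Q)"
  shows "\<exists>T\<subseteq>Q. T \<noteq> {} \<and> connected_within (edge_between F) T \<and>
    L \<le> card (\<Union>T) \<and> card (\<Union>T) \<le> 2 * L"
proof -
  obtain X where X: "X \<in> Q" and large: "L \<le> card (\<Union>(component_within (edge_between F) Q X))"
    using links_large_unions_large_component[OF assms(1,3,4,5,6)] by blast
  define K where "K = component_within (edge_between F) Q X"
  have KQ: "K \<subseteq> Q"
    unfolding K_def using X by (rule component_within_subset)
  have "finite K"
    using KQ assms(1) by (rule finite_subset)
  moreover have "connected_within (edge_between F) K"
    unfolding K_def by (rule connected_within_component[OF symp_edge_between])
  moreover have "\<forall>Y\<in>K. card Y \<le> L"
    using KQ assms(2) by blast
  moreover have "{X} \<subseteq> K"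
    by (simp add: K_def component_within_def)
  moreover have "connected_within (edge_between F) {X}"
    by (simp add: connected_within_def)
  moreover have "card (\<Union>{X}) \<le> 2 * L"
    using assms(2,3) X by auto
  ultimately obtain T where "T \<subseteq> K" "T \<noteq> {}" "connected_within (edge_between F) T"
    "L \<le> card (\<Union>T)" "card (\<Union>T) \<le> 2 * L"
    using grow_cluster[of K F L "{X}"] large unfolding K_def[symmetric] by blast
  then show ?thesis
    using KQ by blast
qed

lemma disjoint_insert_fresh:
  assumes "finite \<V>" "disjoint \<V>" "V \<noteq> {}" "\<forall>W\<in>\<V>. V \<inter> W = {}"
  shows "disjoint (insert V \<V>)" "card (insert V \<V>) = card \<V> + 1"
proof -
  show "disjoint (insert V \<V>)"
    using assms(2,4) by (auto simp: pairwise_insert disjnt_def)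
  have "V \<notin> \<V>"
    using assms(3,4) by blast
  then show "card (insert V \<V>) = card \<V> + 1"
    using assms(1) by simp
qed

lemma clusters_exist:
  fixes L s :: real
  assumes "finite Q" "disjoint Q" "\<forall>X\<in>Q. card X \<le> L \<and> connected_within (adjacent H) X"
    "0 < L" "L \<le> s" "links_large_unions F Q s"
  shows "\<exists>\<V>. finite \<V> \<and> disjoint \<V> \<and> (card (\<Union>Q) - 3 * s) / (2 * L) \<le> card \<V> \<and>
    (\<forall>V\<in>\<V>. V \<subseteq> \<Union>Q \<and> connected_within (adjacent (H \<union> F)) V \<and> L \<le> card V \<and> card V \<le> 2 * L)"
  using assms(1,2,3,6)
proof (induction "card Q" arbitrary: Q rule: less_induct)
  case less
  show ?case
  proof (cases "3 * s \<le> card (\<Union>Q)")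
    case False
    then have "(card (\<Union>Q) - 3 * s) / (2 * L) \<le> 0"
      using assms(4) by (simp add: divide_nonpos_pos)
    then show ?thesis
      by (intro exI[of _ "{}"]) auto
  next
    case True
    then obtain T where T: "T \<subseteq> Q" "T \<noteq> {}" "connected_within (edge_between F) T"
      "L \<le> card (\<Union>T)" "card (\<Union>T) \<le> 2 * L"
      using cluster_exists[OF less.prems(1) _ assms(4,5) less.prems(4)] less.prems(3) by blast
    have "card (Q - T) < card Q"
      using T(1,2) less.prems(1) by (intro psubset_card_mono) auto
    then obtain \<V> where \<V>: "finite \<V>" "disjoint \<V>" "(card (\<Union>(Q - T)) - 3 * s) / (2 * L) \<le> card \<V>"
      "\<forall>V\<in>\<V>. V \<subseteq> \<Union>(Q - T) \<and> connected_within (adjacent (H \<union> F)) V \<and> L \<le> card V \<and> card V \<le> 2 * L"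
      using less.hyps[OF _ _ pairwise_subset[OF less.prems(2)] _
          links_large_unions_subset[OF less.prems(4)], of "Q - T"] less.prems(1,3)
      by blast
    have "\<Union>T \<noteq> {}"
    proof
      assume "\<Union>T = {}"
      then have "card (\<Union>T) = 0"
        by (simp only: card.empty)
      then show False
        using T(4) assms(4) by linarith
    qed
    moreover have "\<Union>T \<inter> \<Union>(Q - T) = {}"
      using Union_disjoint_subfamilies[OF less.prems(2) T(1)] by blast
    then have "\<forall>V\<in>\<V>. \<Union>T \<inter> V = {}"
      using \<V>(4) by blast
    ultimately have disj: "disjoint (insert (\<Union>T) \<V>)"
      and card: "card (insert (\<Union>T) \<V>) = card \<V> + 1"
      using disjoint_insert_fresh[OF \<V>(1,2)] by simp_all
    have "\<Union>Q = \<Union>T \<union> \<Union>(Q - T)"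
      using T(1) by blast
    then have "card (\<Union>Q) \<le> card (\<Union>T) + card (\<Union>(Q - T))"
      by (simp add: card_Un_le)
    then have "(card (\<Union>Q) - 3 * s) / (2 * L) \<le> 1 + (card (\<Union>(Q - T)) - 3 * s) / (2 * L)"
      using T(5) assms(4) by (simp add: field_simps)
    then have "(card (\<Union>Q) - 3 * s) / (2 * L) \<le> card (insert (\<Union>T) \<V>)"
      using \<V>(3) card by simp
    moreover have "connected_within (adjacent (H \<union> F)) (\<Union>T)"
      using connected_within_Union T(1,3) less.prems(3) by blast
    then have "\<forall>V\<in>insert (\<Union>T) \<V>. V \<subseteq> \<Union>Q \<and> connected_within (adjacent (H \<union> F)) V \<and>
        L \<le> card V \<and> card V \<le> 2 * L"
      using \<V>(4) T(1,4,5) by blast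
    ultimately show ?thesis
      using \<V>(1) disj by (intro exI[of _ "insert (\<Union>T) \<V>"]) blast
  qed
qed

section \<open>Edges of \<open>G(n,p)\<close> between large sets\<close>

lemma finite_pairs_on: "finite V \<Longrightarrow> finite (pairs_on V)"
  by (rule finite_subset[of _ "Pow V"]) (auto simp: pairs_on_def)

lemma prob_Gnp_no_edges:
  assumes "E \<subseteq> pairs_on {..<n}" "0 \<le> p" "p \<le> 1"
  shows "measure_pmf.prob (Gnp n p) {f. \<forall>e\<in>E. \<not> f e} = (1 - p) ^ card E"
proof -
  define A where "A = pairs_on {..<n}"
  define B where "B e = (if e \<in> E then {False} else UNIV)" for e :: "nat set"
  have finA: "finite A"
    unfolding A_def by (rule finite_pairs_on) simp
  have "{f. \<forall>e\<in>E. \<not> f e} = Pi A B"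
    using assms(1) by (auto simp: Pi_def B_def A_def)
  then have "measure_pmf.prob (Gnp n p) {f. \<forall>e\<in>E. \<not> f e} =
      (\<Prod>e\<in>A. measure_pmf.prob (bernoulli_pmf p) (B e))"
    unfolding Gnp_def A_def[symmetric] using measure_Pi_pmf_Pi[OF finA] by simp
  also have "\<dots> = (\<Prod>e\<in>A. if e \<in> E then 1 - p else 1)"
    by (intro prod.cong refl) (auto simp: B_def measure_pmf_single assms(2,3))
  also have "\<dots> = (1 - p) ^ card (A \<inter> E)"
    using finA by (simp add: prod.If_cases)
  also have "A \<inter> E = E"
    using assms(1) by (auto simp: A_def)
  finally show ?thesis .
qed

lemma one_minus_power_le_exp:
  fixes p :: real
  assumes "p \<le> 1"
  shows "(1 - p) ^ m \<le> exp (- p * m)"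
proof -
  have "(1 - p) ^ m \<le> exp (- p) ^ m"
    using assms by (intro power_mono) (auto simp: exp_ge_add_one_self[of "-p", simplified])
  also have "\<dots> = exp (- p * m)"
    by (simp add: exp_of_nat_mult[symmetric] mult.commute)
  finally show ?thesis .
qed

lemma card_doubleton_image:
  assumes "X \<inter> Y = {}"
  shows "card ((\<lambda>(a, b). {a, b}) ` (X \<times> Y)) = card X * card Y"
proof -
  have "inj_on (\<lambda>(a, b). {a, b}) (X \<times> Y)"
  proof (rule inj_onI, clarify)
    fix a b a' b' assume "a \<in> X" "b \<in> Y" "a' \<in> X" "b' \<in> Y" "{a, b} = {a', b'}"
    then show "a = a' \<and> b = b'"
      using assms by (metis disjoint_iff doubleton_eq_iff)
  qed
  then show ?thesis
    by (simp add: card_image card_cartesian_product)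
qed

lemma prob_Gnp_no_edge_between:
  fixes p s :: real
  assumes "X \<subseteq> {..<n}" "Y \<subseteq> {..<n}" "X \<inter> Y = {}" "0 \<le> p" "p \<le> 1"
    and "0 \<le> s" "s \<le> card X" "s \<le> card Y"
  shows "measure_pmf.prob (Gnp n p) {f. \<not> edge_between (edges_of n f) X Y} \<le> exp (- p * s\<^sup>2)"
proof -
  define E where "E = (\<lambda>(a, b). {a, b}) ` (X \<times> Y)"
  have E_pairs: "E \<subseteq> pairs_on {..<n}"
  proof
    fix e assume "e \<in> E"
    then obtain a b where "a \<in> X" "b \<in> Y" "e = {a, b}"
      by (auto simp: E_def)
    moreover have "a \<noteq> b"
      using assms(3) calculation(1,2) by blast
    ultimately show "e \<in> pairs_on {..<n}"
      using assms(1,2) unfolding pairs_on_def by blast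
  qed
  have "{f. \<not> edge_between (edges_of n f) X Y} = {f. \<forall>e\<in>E. \<not> f e}"
    using E_pairs by (auto simp: E_def edge_between_def edges_of_def)
  then have "measure_pmf.prob (Gnp n p) {f. \<not> edge_between (edges_of n f) X Y} =
      (1 - p) ^ (card X * card Y)"
    using prob_Gnp_no_edges[OF E_pairs assms(4,5)] card_doubleton_image[OF assms(3)]
    by (simp add: E_def)
  also have "\<dots> \<le> exp (- p * (card X * card Y))"
    using one_minus_power_le_exp[OF assms(5), of "card X * card Y"] by simp
  also have "\<dots> \<le> exp (- p * s\<^sup>2)"
  proof -
    have "s\<^sup>2 \<le> real (card X) * real (card Y)"
      unfolding power2_eq_square using assms(6-8) by (intro mult_mono) auto
    then show ?thesis
      using assms(4) by (simp add: mult_left_mono)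
  qed
  finally show ?thesis .
qed

lemma prob_Gnp_not_links_large_unions:
  fixes P :: "nat set set"
  assumes "finite P" "\<forall>X\<in>P. X \<subseteq> {..<n}" "disjoint P" "0 \<le> p" "p \<le> 1" "0 \<le> s"
  shows "measure_pmf.prob (Gnp n p) {f. \<not> links_large_unions (edges_of n f) P s}
    \<le> 4 ^ card P * exp (- p * s\<^sup>2)"
proof -
  define I where "I = {(A, B). A \<subseteq> P \<and> B \<subseteq> P \<and> A \<inter> B = {} \<and>
    s \<le> card (\<Union>A) \<and> s \<le> card (\<Union>B)}"
  define bad where "bad AB = {f. \<not> edge_between (edges_of n f) (\<Union>(fst AB)) (\<Union>(snd AB))}"
    for AB :: "nat set set \<times> nat set set"
  have "I \<subseteq> Pow P \<times> Pow P"
    by (auto simp: I_def)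
  then have finI: "finite I" and "card I \<le> card (Pow P \<times> Pow P)"
    using assms(1) finite_subset by (blast, intro card_mono, auto)
  then have cardI: "card I \<le> 4 ^ card P"
    using assms(1) by (simp add: card_cartesian_product card_Pow power_mult_distrib[symmetric])
  have bad_le: "measure_pmf.prob (Gnp n p) (bad i) \<le> exp (- p * s\<^sup>2)" if "i \<in> I" for i
  proof -
    obtain A B where i: "i = (A, B)"
      by (cases i)
    then have AB: "A \<subseteq> P" "B \<subseteq> P" "A \<inter> B = {}"
      and large: "s \<le> card (\<Union>A)" "s \<le> card (\<Union>B)"
      using that by (auto simp: I_def)
    have "\<Union>A \<subseteq> {..<n}" "\<Union>B \<subseteq> {..<n}"
      using AB assms(2) by blast+
    then show ?thesis
      unfolding i bad_def
      using prob_Gnp_no_edge_between[OF _ _ Union_disjoint_subfamilies[OF assms(3) AB]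
          assms(4-6) large]
      by simp
  qed
  have "{f. \<not> links_large_unions (edges_of n f) P s} \<subseteq> (\<Union>i\<in>I. bad i)"
  proof
    fix f assume "f \<in> {f. \<not> links_large_unions (edges_of n f) P s}"
    then obtain A B where "A \<subseteq> P" "B \<subseteq> P" "A \<inter> B = {}" "s \<le> card (\<Union>A)" "s \<le> card (\<Union>B)"
      "\<not> edge_between (edges_of n f) (\<Union>A) (\<Union>B)"
      unfolding links_large_unions_def by blast
    then have "(A, B) \<in> I" "f \<in> bad (A, B)"
      by (simp_all add: I_def bad_def)
    then show "f \<in> (\<Union>i\<in>I. bad i)"
      by blast
  qed
  then have "measure_pmf.prob (Gnp n p) {f. \<not> links_large_unions (edges_of n f) P s}
      \<le> measure_pmf.prob (Gnp n p) (\<Union>i\<in>I. bad i)"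
    by (intro measure_pmf.finite_measure_mono) auto
  also have "\<dots> \<le> (\<Sum>i\<in>I. measure_pmf.prob (Gnp n p) (bad i))"
    using finI by (intro measure_pmf.finite_measure_subadditive_finite) auto
  also have "\<dots> \<le> (\<Sum>i\<in>I. exp (- p * s\<^sup>2))"
    using bad_le by (rule sum_mono)
  also have "\<dots> = card I * exp (- p * s\<^sup>2)"
    by simp
  also have "\<dots> \<le> 4 ^ card P * exp (- p * s\<^sup>2)"
    using cardI by (intro mult_right_mono) (auto simp: of_nat_le_iff[symmetric])
  finally show ?thesis .
qed

section \<open>Clusters in \<open>H \<union> G(n,p)\<close>\<close>

lemma neighbours_bounded_max_degree:
  assumes "graph_on {..<n} H"
  shows "finite {u. {v, u} \<in> H} \<and> card {u. {v, u} \<in> H} \<le> max_degree n H"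
proof -
  have in_range: "v < n \<and> u < n" if "{v, u} \<in> H" for u
    using that assms unfolding graph_on_def pairs_on_def by (auto simp: doubleton_eq_iff)
  then have "{u. {v, u} \<in> H} \<subseteq> {..<n}"
    by blast
  then have fin: "finite {u. {v, u} \<in> H}"
    using finite_subset by blast
  show ?thesis
  proof (cases "v < n")
    case True
    have "card {u. {v, u} \<in> H} = degree H v"
      by (simp add: degree_def insert_commute)
    also have "\<dots> \<le> max_degree n H"
      unfolding max_degree_def using True by (intro Max_ge) auto
    finally show ?thesis
      using fin by simp
  next
    case False
    then have "{u. {v, u} \<in> H} = {}"
      using in_range by blast
    then show ?thesis
      by simp
  qed
qed

lemma max_degree_ge_1:
  assumes "graph_on {..<n} H" "connected_graph {..<n} H" "2 \<le> n"
  shows "1 \<le> max_degree n H"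
proof -
  have "0 \<in> {..<n}" "1 \<in> {..<n}"
    using assms(3) by auto
  then have "(adjacent H)\<^sup>*\<^sup>* 0 1"
    using assms(2) unfolding connected_graph_def by blast
  then obtain y where "{0, y} \<in> H"
  proof (cases rule: converse_rtranclpE)
    case base
    then show ?thesis by simp
  next
    case (step y)
    then show ?thesis using that by blast
  qed
  then have "{u. {0, u} \<in> H} \<noteq> {}"
    by blast
  then have "0 < card {u. {0, u} \<in> H}"
    using neighbours_bounded_max_degree[OF assms(1), of 0] by (simp add: card_gt_0_iff)
  then show ?thesis
    using neighbours_bounded_max_degree[OF assms(1), of 0] by linarith
qed

lemma connected_within_if_connected_graph:
  assumes "graph_on V E" "connected_graph V E"
  shows "connected_within (adjacent E) V"
  unfolding connected_within_def
proof (intro ballI)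
  fix u v assume "u \<in> V" "v \<in> V"
  then have uv: "(adjacent E)\<^sup>*\<^sup>* u v"
    using assms(2) unfolding connected_graph_def by blast
  have edge_in: "x \<in> V \<and> y \<in> V" if "adjacent E x y" for x y
    using assms(1) that unfolding graph_on_def pairs_on_def by (auto simp: doubleton_eq_iff)
  show "reach_within (adjacent E) V u v"
    unfolding reach_within_def using uv
    by (rule rtranclp_mono[THEN predicate2D, rotated]) (use edge_in in auto)
qed

lemma connected_graph_induced:
  assumes "connected_within (adjacent R) V" "V \<noteq> {}" "R \<subseteq> pairs_on U"
  shows "graph_on V {e \<in> R. e \<subseteq> V} \<and> connected_graph V {e \<in> R. e \<subseteq> V}"
proof
  show "graph_on V {e \<in> R. e \<subseteq> V}"
    unfolding graph_on_def
  proof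
    fix e assume e: "e \<in> {e \<in> R. e \<subseteq> V}"
    then obtain i j where "i \<noteq> j" "e = {i, j}"
      using assms(3) unfolding pairs_on_def by blast
    then show "e \<in> pairs_on V"
      using e unfolding pairs_on_def by blast
  qed
  have "(adjacent {e \<in> R. e \<subseteq> V})\<^sup>*\<^sup>* u v" if "u \<in> V" "v \<in> V" for u v
  proof -
    have "reach_within (adjacent R) V u v"
      using assms(1) that unfolding connected_within_def by blast
    then show ?thesis
      unfolding reach_within_def by (rule rtranclp_mono[THEN predicate2D, rotated]) auto
  qed
  then show "connected_graph V {e \<in> R. e \<subseteq> V}"
    using assms(2) unfolding connected_graph_def by blast
qed

lemma good_family_if_clusters:
  assumes "finite \<V>" "disjoint \<V>" "R \<subseteq> pairs_on {..<n}" "0 < 96 * C * \<Delta> / (real n * p)"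
    and "\<forall>V\<in>\<V>. V \<subseteq> {..<n} \<and> connected_within (adjacent R) V \<and>
      96 * C * \<Delta> / (real n * p) \<le> card V \<and> card V \<le> 192 * C * \<Delta> / (real n * p)"
    and "(real n)^2 * p / (9600 * C * \<Delta>) \<le> card \<V>"
  shows "good_family n C p \<Delta> R"
proof -
  obtain vs where vs: "set vs = \<V>" "distinct vs"
    using finite_distinct_list[OF assms(1)] by blast
  define Rs where "Rs = map (\<lambda>V. (V, {e \<in> R. e \<subseteq> V})) vs"
  have length: "length Rs = card \<V>"
    using distinct_card[OF vs(2)] vs(1) by (simp add: Rs_def)
  have induced: "graph_on V {e \<in> R. e \<subseteq> V} \<and> connected_graph V {e \<in> R. e \<subseteq> V}"
    if "V \<in> \<V>" for V
  proof (rule connected_graph_induced[OF _ _ assms(3)])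
    show "connected_within (adjacent R) V"
      using assms(5) that by blast
    have "96 * C * \<Delta> / (real n * p) \<le> card V"
      using assms(5) that by blast
    then show "V \<noteq> {}"
      using assms(4) by auto
  qed
  have "fst (Rs ! i) \<subseteq> {..<n} \<and> graph_on (fst (Rs ! i)) (snd (Rs ! i)) \<and>
      snd (Rs ! i) \<subseteq> R \<and> connected_graph (fst (Rs ! i)) (snd (Rs ! i)) \<and>
      96 * C * \<Delta> / (real n * p) \<le> real (card (fst (Rs ! i))) \<and>
      real (card (fst (Rs ! i))) \<le> 192 * C * \<Delta> / (real n * p)" if "i < length Rs" for i
  proof -
    have "vs ! i \<in> \<V>"
      using that vs(1) nth_mem[of i vs] by (simp add: Rs_def)
    then show ?thesis
      using that induced assms(5) by (simp add: Rs_def)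
  qed
  moreover have "fst (Rs ! i) \<inter> fst (Rs ! j) = {}"
    if "i < length Rs" "j < length Rs" "i \<noteq> j" for i j
  proof -
    have "i < length vs" "j < length vs"
      using that by (simp_all add: Rs_def)
    then have "vs ! i \<noteq> vs ! j" "vs ! i \<in> \<V>" "vs ! j \<in> \<V>"
      using that(3) vs nth_eq_iff_index_eq nth_mem by blast+
    then show ?thesis
      using assms(2) that by (simp add: Rs_def disjointD)
  qed
  ultimately show ?thesis
    unfolding good_family_def using assms(6) length by (intro exI[of _ Rs]) simp
qed

lemma graph_pieces:
  assumes "graph_on {..<n} H" "connected_graph {..<n} H" "2 \<le> n" "1 \<le> k"
  shows "\<exists>P. finite P \<and> disjoint P \<and> n < card (\<Union>P) + k \<and>
    (\<forall>X\<in>P. X \<subseteq> {..<n} \<and> connected_within (adjacent H) X \<and> k \<le> card X \<and>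
      card X \<le> max_degree n H * k)"
proof -
  obtain P where P: "finite P" "disjoint P" "card {..<n} < card (\<Union>P) + k"
    "\<forall>X\<in>P. X \<subseteq> {..<n} \<and> connected_within (adjacent H) X \<and> k \<le> card X \<and>
      card X \<le> 1 + max_degree n H * (k - 1)"
    using connected_within_pieces[OF symp_adjacent _ connected_within_if_connected_graph[OF assms(1,2)]
        assms(4) neighbours_bounded_max_degree[OF assms(1)]]
    by blast
  have le: "1 + max_degree n H * (k - 1) \<le> max_degree n H * k"
    using max_degree_ge_1[OF assms(1-3)] assms(4) by (cases k) auto
  have "\<forall>X\<in>P. X \<subseteq> {..<n} \<and> connected_within (adjacent H) X \<and> k \<le> card X \<and>
      card X \<le> max_degree n H * k"
  proof
    fix X assume "X \<in> P"
    then have "X \<subseteq> {..<n}" "connected_within (adjacent H) X" "k \<le> card X"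
      "card X \<le> 1 + max_degree n H * (k - 1)"
      using P(4) by auto
    with le show "X \<subseteq> {..<n} \<and> connected_within (adjacent H) X \<and> k \<le> card X \<and>
        card X \<le> max_degree n H * k"
      by simp
  qed
  then show ?thesis
    using P(1-3) by auto
qed

lemma card_mult_le_card_Union:
  assumes "finite P" "disjoint P" "\<forall>X\<in>P. finite X \<and> k \<le> card X"
  shows "card P * k \<le> card (\<Union>P)"
proof -
  have "card P * k = (\<Sum>X\<in>P. k)"
    by simp
  also have "\<dots> \<le> (\<Sum>X\<in>P. card X)"
    using assms(3) by (intro sum_mono) auto
  also have "\<dots> = card (\<Union>P)"
    using assms by (intro card_Union_disjoint[symmetric]) auto
  finally show ?thesis .
qed

lemma four_power_exp_le:
  fixes q :: real
  assumes "real N * 384 \<le> q"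
  shows "4 ^ N * exp (- q / 100) \<le> exp (- q / 250)"
proof -
  have "(2::real) \<le> exp 1"
    using exp_ge_add_one_self[of 1] by simp
  then have "(4::real) \<le> exp 1 * exp 1"
    using mult_mono[of 2 "exp 1" 2 "exp (1::real)"] by simp
  also have "\<dots> = exp 2"
    by (simp add: exp_add[symmetric])
  finally have "(4::real) ^ N \<le> exp 2 ^ N"
    by (intro power_mono) auto
  also have "\<dots> = exp (2 * real N)"
    by (simp add: exp_of_nat_mult[symmetric] mult.commute)
  finally have "4 ^ N * exp (- q / 100) \<le> exp (2 * real N) * exp (- q / 100)"
    by simp
  also have "\<dots> = exp (2 * real N - q / 100)"
    by (simp add: exp_add[symmetric])
  also have "\<dots> \<le> exp (- q / 250)"
    using assms by simp
  finally show ?thesis .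
qed

lemma good_family_if_links_large_unions:
  fixes C p L \<Delta> :: real
  assumes "finite P" "disjoint P"
    and "\<forall>X\<in>P. X \<subseteq> {..<n} \<and> connected_within (adjacent H) X \<and> card X \<le> L"
    and "real n < card (\<Union>P) + L" "links_large_unions F P (real n / 10)" "H \<union> F \<subseteq> pairs_on {..<n}"
    and L: "L = 96 * C * \<Delta> / (real n * p)" "0 < L" "L \<le> real n / 50"
  shows "good_family n C p \<Delta> (H \<union> F)"
proof -
  have "\<forall>X\<in>P. card X \<le> L \<and> connected_within (adjacent H) X" "L \<le> real n / 10"
    using assms(3) L(3) by auto
  then obtain \<V> where \<V>: "finite \<V>" "disjoint \<V>"
    "(card (\<Union>P) - 3 * (real n / 10)) / (2 * L) \<le> card \<V>"
    "\<forall>V\<in>\<V>. V \<subseteq> \<Union>P \<and> connected_within (adjacent (H \<union> F)) V \<and> L \<le> card V \<and> card V \<le> 2 * L"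
    using clusters_exist[OF assms(1,2) _ L(2) _ assms(5)] by blast
  have "real n / 50 \<le> card (\<Union>P) - 3 * (real n / 10)"
    using assms(4) L(3) by linarith
  then have "(real n / 50) / (2 * L) \<le> (card (\<Union>P) - 3 * (real n / 10)) / (2 * L)"
    using L(2) by (intro divide_right_mono) auto
  \<comment> \<open>\<open>0 < L\<close> rules out the junk value \<open>x / 0 = 0\<close> in the definition of \<open>L\<close>.\<close>
  moreover have "real n * p \<noteq> 0" "C * \<Delta> \<noteq> 0"
    using L(1,2) by (auto simp del: of_nat_eq_0_iff)
  then have "(real n)^2 * p / (9600 * C * \<Delta>) = (real n / 50) / (2 * L)"
    unfolding L(1) by (simp add: field_simps power2_eq_square)
  moreover have "\<forall>V\<in>\<V>. V \<subseteq> {..<n} \<and> connected_within (adjacent (H \<union> F)) V \<and>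
      96 * C * \<Delta> / (real n * p) \<le> card V \<and> card V \<le> 192 * C * \<Delta> / (real n * p)"
    using \<V>(4) assms(3) unfolding L(1) by fastforce
  ultimately show ?thesis
    using good_family_if_clusters[OF \<V>(1,2) assms(6)] \<V>(3) L(1,2) by simp
qed

lemma prob_Gnp_not_links_large_unions_le_exp:
  fixes P :: "nat set set"
  assumes "finite P" "\<forall>X\<in>P. X \<subseteq> {..<n}" "disjoint P" "0 \<le> p" "p \<le> 1"
    and "real (card P) * 384 \<le> (real n)^2 * p"
  shows "measure_pmf.prob (Gnp n p) {f. \<not> links_large_unions (edges_of n f) P (real n / 10)}
    \<le> exp (- ((real n)^2 * p) / 250)"
proof -
  have "measure_pmf.prob (Gnp n p) {f. \<not> links_large_unions (edges_of n f) P (real n / 10)}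
      \<le> 4 ^ card P * exp (- p * (real n / 10)\<^sup>2)"
    using prob_Gnp_not_links_large_unions[OF assms(1-5)] by simp
  also have "\<dots> = 4 ^ card P * exp (- ((real n)^2 * p) / 100)"
    by (simp add: power2_eq_square field_simps)
  also have "\<dots> \<le> exp (- ((real n)^2 * p) / 250)"
    using four_power_exp_le[OF assms(6)] by simp
  finally show ?thesis .
qed

lemma measure_pmf_prob_ge_if_complement_le:
  assumes "{x. P x} \<subseteq> A" "measure_pmf.prob M {x. \<not> P x} \<le> \<delta>"
  shows "1 - \<delta> \<le> measure_pmf.prob M A"
proof -
  have "measure_pmf.prob M {x. P x} = 1 - measure_pmf.prob M {x. \<not> P x}"
    using measure_pmf.prob_compl[of "{x. \<not> P x}" M]
    by (simp add: Compl_eq_Diff_UNIV[symmetric] Collect_neg_eq[symmetric])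
  moreover have "measure_pmf.prob M {x. P x} \<le> measure_pmf.prob M A"
    using assms(1) by (intro measure_pmf.finite_measure_mono) auto
  ultimately show ?thesis
    using assms(2) by linarith
qed

lemma piece_size_bounds:
  fixes C p :: real
  assumes "8 \<le> C" "0 < p" "p \<le> 2 / real n" "2 \<le> n" "1 \<le> \<Delta>"
    and "real \<Delta> \<le> (real n)^2 * p / (4800 * C)"
  defines "k \<equiv> nat \<lfloor>96 * C / (real n * p)\<rfloor>" and "L \<equiv> 96 * C * \<Delta> / (real n * p)"
  shows "1 \<le> k" "96 * C / (real n * p) \<le> 2 * real k" "real \<Delta> * real k \<le> L" "real k \<le> L"
    and "0 < L" "L \<le> real n / 50" "0 < real n * p" "p \<le> 1"
proof -
  define x where "x = 96 * C / (real n * p)"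
  have np: "0 < real n * p" "real n * p \<le> 2"
    using assms(2-4) by (auto simp: field_simps)
  then show "0 < real n * p"
    by blast
  have "2 * p \<le> real n * p"
    using assms(2,4) by (intro mult_right_mono) auto
  then show "p \<le> 1"
    using np(2) by linarith
  have "384 \<le> x"
    unfolding x_def using assms(1) np by (simp add: field_simps)
  then show "1 \<le> k" "x \<le> 2 * real k"
    unfolding k_def x_def[symmetric] by linarith+
  have "real k \<le> x"
    unfolding k_def x_def[symmetric] using \<open>384 \<le> x\<close> by linarith
  then show "real \<Delta> * real k \<le> L"
    unfolding L_def using mult_left_mono[of "real k" x "real \<Delta>"] by (simp add: x_def mult_ac)
  moreover have "real k \<le> real \<Delta> * real k"
    using assms(5) mult_right_mono[of 1 "real \<Delta>" "real k"] by simp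
  ultimately show "real k \<le> L"
    by linarith
  show "0 < L"
    unfolding L_def using assms(1,5) np(1) by simp
  show "L \<le> real n / 50"
    using assms(1,6) np(1) unfolding L_def by (simp add: field_simps power2_eq_square)
qed

lemma card_pieces_le:
  fixes C p :: real
  assumes "finite P" "disjoint P" "\<forall>X\<in>P. X \<subseteq> {..<n} \<and> k \<le> card X"
    and "96 * C / (real n * p) \<le> 2 * real k" "8 \<le> C" "0 < real n * p"
  shows "real (card P) * 384 \<le> (real n)^2 * p"
proof -
  have "card P * k \<le> card (\<Union>P)" "card (\<Union>P) \<le> n"
    using card_mult_le_card_Union[OF assms(1,2)] assms(3) card_mono[of "{..<n}" "\<Union>P"]
    by (auto intro: finite_subset)
  then have "card P * k \<le> n"
    by linarith
  then have Nk: "real (card P) * real k \<le> real n"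
    using of_nat_mono[of "card P * k" n] by simp
  have "C * 48 \<le> real k * (real n * p)"
    using assms(4,6) by (simp add: field_simps)
  then have "real (card P) * (C * 48) \<le> real (card P) * (real k * (real n * p))"
    by (intro mult_left_mono) auto
  also have "\<dots> = (real (card P) * real k) * (real n * p)"
    by (simp add: mult.assoc)
  also have "\<dots> \<le> real n * (real n * p)"
    using Nk assms(6) by (intro mult_right_mono) auto
  finally have "real (card P) * (C * 48) \<le> real n * (real n * p)" .
  moreover have "real (card P) * 384 \<le> real (card P) * (C * 48)"
    using assms(5) by (intro mult_left_mono) auto
  ultimately have "real (card P) * 384 \<le> real n * (real n * p)"
    by linarith
  then show ?thesis
    by (simp add: power2_eq_square mult.assoc)
qed

lemma prob_good_family_ge:
  fixes C p :: real
  assumes "8 \<le> C" "0 < p" "p \<le> 2 / real n" "2 \<le> n"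
    and H: "graph_on {..<n} H" "connected_graph {..<n} H"
    and "real (max_degree n H) \<le> (real n)^2 * p / (4800 * C)"
  shows "1 - exp (- ((real n)^2 * p) / 250) \<le>
    measure_pmf.prob (Gnp n p) {G. good_family n C p (real (max_degree n H)) (H \<union> edges_of n G)}"
proof -
  define \<Delta> where "\<Delta> = max_degree n H"
  define k where "k = nat \<lfloor>96 * C / (real n * p)\<rfloor>"
  define L where "L = 96 * C * \<Delta> / (real n * p)"
  have "1 \<le> \<Delta>"
    unfolding \<Delta>_def using max_degree_ge_1[OF H assms(4)] .
  note bounds = piece_size_bounds[OF assms(1-4) this assms(7)[folded \<Delta>_def], folded k_def L_def]
  obtain P where P: "finite P" "disjoint P" "n < card (\<Union>P) + k"
    "\<forall>X\<in>P. X \<subseteq> {..<n} \<and> connected_within (adjacent H) X \<and> k \<le> card X \<and> card X \<le> \<Delta> * k"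
    using graph_pieces[OF H assms(4) bounds(1)] unfolding \<Delta>_def by blast
  have small: "\<forall>X\<in>P. X \<subseteq> {..<n} \<and> connected_within (adjacent H) X \<and> card X \<le> L"
  proof
    fix X assume "X \<in> P"
    then have "X \<subseteq> {..<n} \<and> connected_within (adjacent H) X" "card X \<le> \<Delta> * k"
      using P(4) by auto
    moreover have "real (card X) \<le> real (\<Delta> * k)"
      using calculation(2) by (simp only: of_nat_le_iff)
    ultimately show "X \<subseteq> {..<n} \<and> connected_within (adjacent H) X \<and> card X \<le> L"
      using bounds(3) by simp
  qed
  have cover: "real n < card (\<Union>P) + L"
    using P(3) bounds(4) by linarith
  have "real (card P) * 384 \<le> (real n)^2 * p"
    using card_pieces_le[OF P(1,2) _ bounds(2) assms(1) bounds(7)] P(4) by blast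
  then have "measure_pmf.prob (Gnp n p) {f. \<not> links_large_unions (edges_of n f) P (real n / 10)}
      \<le> exp (- ((real n)^2 * p) / 250)"
    using prob_Gnp_not_links_large_unions_le_exp[OF P(1) _ P(2)] P(4) bounds(8) assms(2) by auto
  moreover have "{f. links_large_unions (edges_of n f) P (real n / 10)}
      \<subseteq> {G. good_family n C p (real \<Delta>) (H \<union> edges_of n G)}"
  proof
    fix f assume "f \<in> {f. links_large_unions (edges_of n f) P (real n / 10)}"
    moreover have "H \<union> edges_of n f \<subseteq> pairs_on {..<n}"
      using H(1) by (auto simp: graph_on_def edges_of_def)
    ultimately show "f \<in> {G. good_family n C p (real \<Delta>) (H \<union> edges_of n G)}"
      using good_family_if_links_large_unions[OF P(1,2) small cover _ _ L_def bounds(5,6)] by simp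
  qed
  ultimately show ?thesis
    unfolding \<Delta>_def by (rule measure_pmf_prob_ge_if_complement_le[rotated])
qed

theorem mainTheorem4:
  fixes C :: real and p :: "nat \<Rightarrow> real"
  assumes "C \<ge> 8"
    and "\<forall>\<^sub>F n in sequentially. 0 < p n \<and> p n \<le> 2 / real n"
    and "filterlim (\<lambda>n. (real n)^2 * p n) at_top sequentially"
  shows "\<forall>\<epsilon>>0. \<forall>\<^sub>F n in sequentially. \<forall>H.
           graph_on {..<n} H \<and> connected_graph {..<n} H \<and>
           real (max_degree n H) \<le> (real n)^2 * p n / (4800 * C) \<longrightarrow>
           measure_pmf.prob (Gnp n (p n))
             {G. good_family n C (p n) (real (max_degree n H)) (H \<union> edges_of n G)} \<ge> 1 - \<epsilon>"
proof (intro allI impI)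
  fix \<epsilon> :: real assume "0 < \<epsilon>"
  have "\<forall>\<^sub>F n in sequentially. max 4 (- 250 * ln \<epsilon>) \<le> (real n)^2 * p n"
    using assms(3) unfolding filterlim_at_top by blast
  with assms(2) show "\<forall>\<^sub>F n in sequentially. \<forall>H.
           graph_on {..<n} H \<and> connected_graph {..<n} H \<and>
           real (max_degree n H) \<le> (real n)^2 * p n / (4800 * C) \<longrightarrow>
           measure_pmf.prob (Gnp n (p n))
             {G. good_family n C (p n) (real (max_degree n H)) (H \<union> edges_of n G)} \<ge> 1 - \<epsilon>"
  proof eventually_elim
    case (elim n)
    then have "0 < n"
      by (cases n) auto
    then have "(real n)^2 * p n \<le> 2 * real n"
      using elim mult_left_mono[of "p n" "2 / real n" "(real n)^2"] by (simp add: power2_eq_square)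
    then have "2 \<le> n"
      using elim by linarith
    moreover have "exp (- ((real n)^2 * p n) / 250) \<le> \<epsilon>"
      using elim \<open>0 < \<epsilon>\<close> by (simp add: ln_ge_iff[symmetric])
    ultimately show ?case
      using prob_good_family_ge[OF assms(1)] elim by fastforce
  qed
qed

end
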